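(* Consider the version of the jelly–labour model with money described in the context, with constant total amount of money $M=m^{(H)}_t+m^{(F)}_t$. Let the economic-equilibrium labour be $L_E=\frac{\beta}{\alpha+\beta}L_f$. If $M<L_E$ initially, then the economic equilibrium can never be reached.
   Context: Model (version with money as a pure store of value). There are an aggregate household and an aggregate firm, and two goods: labour (the numéraire, wage $w=1$; one unit of money equals one unit of labour in value) and jelly. Parameters: $\alpha,\beta>0$, $0<\gamma<1$, labour force $L_f>0$. The household has utility $(L_f-L)^\alpha J^\beta$ and the firm has production function $J=L^\gamma$ and expected demand function $\phi_t(J)=z_t/J^{\zeta_t}$. The money holdings at time $t$ are $m^{(H)}_t,m^{(F)}_t\ge0$. One period $t\to t+1$ proceeds as follows. (1) The firm chooses labour demand $L^{(D)}_{t+1}=\arg\min_L|L^\gamma\phi_t(L^\gamma)-L|$ subject to $0\le L\le L_f$ and $L\le m^{(F)}_t$ (it can only employ labour it can pay for). It sets the price $p_{t+1}=\phi_t((L^{(D)}_{t+1})^\gamma)$. (2) The household supplies $L^{(S)}_{t+1}=\frac{\beta}{\alpha+\beta}L_f$. (3) Transacted labour is $L^{(M)}_{t+1}=\min\{L^{(D)}_{t+1},L^{(S)}_{t+1}\}$. (4) The jelly supply is $J^{(S)}_{t+1}=(L^{(M)}_{t+1})^\gamma$. (5) The household demands $J^{(D)}_{t+1}=\min\{\frac{\beta}{\alpha+\beta}\frac{L_f}{p_{t+1}},\frac{m^{(H)}_t}{p_{t+1}}\}$. (6) Transacted jelly is $J^{(M)}_{t+1}=\min\{J^{(D)}_{t+1},J^{(S)}_{t+1}\}$.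 (7) The money holdings update as $m^{(F)}_{t+1}=m^{(F)}_t+p_{t+1}J^{(M)}_{t+1}-L^{(M)}_{t+1}$ and $m^{(H)}_{t+1}=m^{(H)}_t-p_{t+1}J^{(M)}_{t+1}+L^{(M)}_{t+1}$. (8) The firm updates $(z,\zeta)$. The economic state at time $t$ is $e_t=(L^{(D)}_t,L^{(S)}_t,J^{(D)}_t,J^{(S)}_t,p_t)$. The economic equilibrium is the unique economic state in which both markets clear, $e_E=(L_E,L_E,L_E^\gamma,L_E^\gamma,p_E)$, with $L_E=\frac{\beta}{\alpha+\beta}L_f$ and $p_E=L_E^{1-\gamma}$. Reaching the economic equilibrium means $e_t=e_E$ for some $t$; in particular the firm must employ $L_E$ units of labour at some time. *)

theory Defs
  imports Complex_Main
begin

definition phi :: "real \<Rightarrow> real \<Rightarrow> real \<Rightarrow> real" where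
  "phi z zeta J = z / (J powr zeta)"

definition labour_demand_choice ::
  "real \<Rightarrow> real \<Rightarrow> real \<Rightarrow> real \<Rightarrow> real \<Rightarrow> real \<Rightarrow> bool" where
  "labour_demand_choice gamma Lf z zeta mF L \<longleftrightarrow>
     (0 \<le> L \<and> L \<le> Lf \<and> L \<le> mF \<and>
      (\<forall>L'. 0 \<le> L' \<and> L' \<le> Lf \<and> L' \<le> mF \<longrightarrow>
         \<bar>L powr gamma * phi z zeta (L powr gamma) - L\<bar>
           \<le> \<bar>L' powr gamma * phi z zeta (L' powr gamma) - L'\<bar>))"

text \<open>A run of the jelly-labour model with money as a pure store of value.
  z, zeta are the firm's expectation parameters (updated by an arbitrary rule, step (8)).\<close>
definition jelly_money_run ::
  "real \<Rightarrow> real \<Rightarrow> real \<Rightarrow> real \<Rightarrow> (nat \<Rightarrow> real) \<Rightarrow> (nat \<Rightarrow> real) \<Rightarrow>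
   (nat \<Rightarrow> real) \<Rightarrow> (nat \<Rightarrow> real) \<Rightarrow> (nat \<Rightarrow> real) \<Rightarrow> (nat \<Rightarrow> real) \<Rightarrow> (nat \<Rightarrow> real) \<Rightarrow>
   (nat \<Rightarrow> real) \<Rightarrow> (nat \<Rightarrow> real) \<Rightarrow> bool" where
  "jelly_money_run alpha beta gamma Lf z zeta LD LS JD JS p mH mF \<longleftrightarrow>
     0 \<le> mH 0 \<and> 0 \<le> mF 0 \<and>
     (\<forall>t.
        labour_demand_choice gamma Lf (z t) (zeta t) (mF t) (LD (Suc t)) \<and>
        p (Suc t) = phi (z t) (zeta t) ((LD (Suc t)) powr gamma) \<and>
        LS (Suc t) = beta / (alpha + beta) * Lf \<and>
        JS (Suc t) = (min (LD (Suc t)) (LS (Suc t))) powr gamma \<and>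
        JD (Suc t) = min (beta / (alpha + beta) * Lf / p (Suc t)) (mH t / p (Suc t)) \<and>
        mF (Suc t) = mF t + p (Suc t) * min (JD (Suc t)) (JS (Suc t))
                       - min (LD (Suc t)) (LS (Suc t)) \<and>
        mH (Suc t) = mH t - p (Suc t) * min (JD (Suc t)) (JS (Suc t))
                       + min (LD (Suc t)) (LS (Suc t)))"

definition econ_equilibrium ::
  "real \<Rightarrow> real \<Rightarrow> real \<Rightarrow> real \<Rightarrow> real \<times> real \<times> real \<times> real \<times> real" where
  "econ_equilibrium alpha beta gamma Lf =
     (let LE = beta / (alpha + beta) * Lf
      in (LE, LE, LE powr gamma, LE powr gamma, LE powr (1 - gamma)))"

end

theory Submission
  imports Defs
begin

text \<open>Money is only passed between household and firm, so the total M stays constant. To employ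
  L_E units of labour the firm must hold at least L_E before the period, and to buy the equilibrium
  output L_E^gamma at the equilibrium price L_E^(1-gamma) the household must hold at least
  L_E^gamma * L_E^(1-gamma) = L_E as well. Reaching the equilibrium therefore requires
  M \<ge> 2 L_E, which fails when M < L_E.\<close>

lemma jelly_money_run_money_conserved:
  assumes "jelly_money_run alpha beta gamma Lf z zeta LD LS JD JS p mH mF"
  shows "mH t + mF t = mH 0 + mF 0"
proof (induction t)
  case (Suc t)
  then show ?case using assms unfolding jelly_money_run_def by auto
qed simp

lemma jelly_money_run_labour_demand_le_firm_money:
  assumes "jelly_money_run alpha beta gamma Lf z zeta LD LS JD JS p mH mF"
  shows "LD (Suc t) \<le> mF t"
  using assms unfolding jelly_money_run_def labour_demand_choice_def by blast

lemma jelly_money_run_spending_le_household_money: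
  assumes "jelly_money_run alpha beta gamma Lf z zeta LD LS JD JS p mH mF"
    and "p (Suc t) > 0"
  shows "p (Suc t) * JD (Suc t) \<le> mH t"
proof -
  have "JD (Suc t) \<le> mH t / p (Suc t)"
    using assms(1) unfolding jelly_money_run_def by (metis min.cobounded2)
  then show ?thesis
    using assms(2) by (simp add: pos_le_divide_eq mult.commute)
qed

lemma econ_equilibrium_reached_imp_money_ge:
  assumes run: "jelly_money_run alpha beta gamma Lf z zeta LD LS JD JS p mH mF"
    and labour_pos: "beta / (alpha + beta) * Lf > 0"
    and eq: "(LD (Suc t), LS (Suc t), JD (Suc t), JS (Suc t), p (Suc t))
              = econ_equilibrium alpha beta gamma Lf"
  shows "mH t + mF t \<ge> 2 * (beta / (alpha + beta) * Lf)"
proof -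
  define LE where "LE = beta / (alpha + beta) * Lf"
  have LE_pos: "LE > 0"
    using labour_pos unfolding LE_def .
  have eqs: "LD (Suc t) = LE" "JD (Suc t) = LE powr gamma" "p (Suc t) = LE powr (1 - gamma)"
    using eq unfolding econ_equilibrium_def LE_def Let_def by auto
  have "LE \<le> mF t"
    using jelly_money_run_labour_demand_le_firm_money[OF run] eqs(1) by metis
  moreover have "p (Suc t) > 0"
    using eqs(3) LE_pos by simp
  then have "p (Suc t) * JD (Suc t) \<le> mH t"
    by (rule jelly_money_run_spending_le_household_money[OF run])
  moreover have "p (Suc t) * JD (Suc t) = LE"
    using eqs LE_pos by (simp add: powr_add[symmetric])
  ultimately show ?thesis
    unfolding LE_def by linarith
qed

theorem proposition5:
  fixes alpha beta gamma Lf :: real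
    and z zeta LD LS JD JS p mH mF :: "nat \<Rightarrow> real"
  assumes "alpha > 0" and "beta > 0" and "0 < gamma" and "gamma < 1" and "Lf > 0"
    and "jelly_money_run alpha beta gamma Lf z zeta LD LS JD JS p mH mF"
    and "mH 0 + mF 0 < beta / (alpha + beta) * Lf"
  shows "\<forall>t. (LD (Suc t), LS (Suc t), JD (Suc t), JS (Suc t), p (Suc t))
              \<noteq> econ_equilibrium alpha beta gamma Lf"
proof (intro allI notI)
  fix t
  assume reached: "(LD (Suc t), LS (Suc t), JD (Suc t), JS (Suc t), p (Suc t))
              = econ_equilibrium alpha beta gamma Lf"
  define LE where "LE = beta / (alpha + beta) * Lf"
  have labour_pos: "LE > 0"
    unfolding LE_def using assms(1,2,5) by simp
  have "2 * LE \<le> mH t + mF t"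
    using econ_equilibrium_reached_imp_money_ge[OF assms(6) _ reached] labour_pos
    unfolding LE_def by blast
  also have "\<dots> = mH 0 + mF 0"
    by (rule jelly_money_run_money_conserved[OF assms(6)])
  finally show False
    using assms(7) labour_pos unfolding LE_def[symmetric] by linarith
qed

end
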